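(* Let $X$ be a linearly ordered set and let $\mathrm{BiComDer}\langle X,d\rangle$ be the free $\mathrm{BiCom}$-algebra with one derivation $d$ generated by $X$ (identified with $\mathrm{BiCom}\langle d^\omega X\rangle$, $d^\omega X=\{d^s(x)\mid s\ge0,x\in X\}$). Let $\mathrm{SGD}^!\langle X\rangle$ be the subalgebra of $\mathrm{BiComDer}\langle X,d\rangle$ generated by $X$ with respect to the operations $*$ and $u\star v=d(u)\odot v$. Then an element $f\in\mathrm{BiComDer}\langle X,d\rangle$ belongs to $\mathrm{SGD}^!\langle X\rangle$ if and only if, when $f$ is written in the basis of monomials of $\mathrm{BiCom}\langle d^\omega X\rangle$, all monomials occurring in $f$ have weight $-1$.
   Context: A $\mathrm{BiCom}$-algebra is a vector space with two bilinear operations $*$ and $\odot$, each associative and commutative, satisfying $(x\odot y)*z=x\odot(y*z)$; a derivation of it is a linear map that is a derivation for both operations. The weight of monomials in $\mathrm{BiComDer}\langle X,d\rangle$ is defined inductively by $\mathrm{wt}(x)=-1$ for $x\in X$, $\mathrm{wt}(d(u))=\mathrm{wt}(u)+1$, $\mathrm{wt}(u*v)=\mathrm{wt}(u)+\mathrm{wt}(v)+1$, $\mathrm{wt}(u\odot v)=\mathrm{wt}(u)+\mathrm{wt}(v)$ (this is well defined on the basis monomials $x_1*\dots*x_t*(y_1\odot\dots\odot y_k)$, $x_i,y_j\in d^\omega X$). *)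

theory Defs
  imports Main "HOL-Library.Multiset"
begin

text \<open>
  Concrete model of the free BiCom-algebra with one derivation, BiComDer<X,d>,
  identified (as in the paper) with BiCom<d^omega X>.

  A letter d^s(x) of d^omega X is encoded as the pair (s, x).

  A basis monomial x_1 * ... * x_t * (y_1 odot ... odot y_k) (k >= 1) of
  BiCom<d^omega X> is encoded by the pair (M, t) where M is the multiset
  {x_1,...,x_t,y_1,...,y_k} of all its letters and t is the number of
  star-products.  By the identities of BiCom (commutativity, associativity,
  (a odot b) * c = a odot (b * c), hence (a odot b) * c = (a odot c) * b)
  a monomial is determined exactly by these data, and distinct valid pairs
  give linearly independent elements; valid pairs are those with M nonempty
  and t < size M.
\<close>

type_synonym 'x letter = "nat \<times> 'x"
type_synonym 'x bmon = "'x letter multiset \<times> nat"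

definition valid_mon :: "'x bmon \<Rightarrow> bool" where
  "valid_mon m \<longleftrightarrow> fst m \<noteq> {#} \<and> snd m < size (fst m)"

definition star_mon :: "'x bmon \<Rightarrow> 'x bmon \<Rightarrow> 'x bmon" where
  "star_mon m n = (fst m + fst n, snd m + snd n + 1)"

definition odot_mon :: "'x bmon \<Rightarrow> 'x bmon \<Rightarrow> 'x bmon" where
  "odot_mon m n = (fst m + fst n, snd m + snd n)"

text \<open>Weight: wt(d^s x) = s - 1, wt(u*v) = wt u + wt v + 1, wt(u odot v) = wt u + wt v.\<close>
definition mon_weight :: "'x bmon \<Rightarrow> int" where
  "mon_weight m = (\<Sum>a\<in>#fst m. int (fst a) - 1) + int (snd m)"

definition supp :: "('m \<Rightarrow> 'k::zero) \<Rightarrow> 'm set" where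
  "supp f = {m. f m \<noteq> 0}"

definition BiComDer :: "('x bmon \<Rightarrow> 'k::zero) set" where
  "BiComDer = {f. finite (supp f) \<and> (\<forall>m\<in>supp f. valid_mon m)}"

definition bstar :: "('x bmon \<Rightarrow> 'k::comm_ring_1) \<Rightarrow> ('x bmon \<Rightarrow> 'k) \<Rightarrow> ('x bmon \<Rightarrow> 'k)" where
  "bstar f g = (\<lambda>p. \<Sum>m\<in>supp f. \<Sum>n\<in>supp g. if star_mon m n = p then f m * g n else 0)"

definition bodot :: "('x bmon \<Rightarrow> 'k::comm_ring_1) \<Rightarrow> ('x bmon \<Rightarrow> 'k) \<Rightarrow> ('x bmon \<Rightarrow> 'k)" where
  "bodot f g = (\<lambda>p. \<Sum>m\<in>supp f. \<Sum>n\<in>supp g. if odot_mon m n = p then f m * g n else 0)"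

text \<open>The derivation d: d(d^s x) = d^(s+1) x, extended to monomials by the
  Leibniz rule for both products (so d(M,t) = sum over occurrences of letters a
  in M of (M - {a} + {d a}, t)), and linearly.\<close>
definition dletter :: "'x letter \<Rightarrow> 'x letter" where
  "dletter a = (Suc (fst a), snd a)"

definition bder :: "('x bmon \<Rightarrow> 'k::comm_ring_1) \<Rightarrow> ('x bmon \<Rightarrow> 'k)" where
  "bder f = (\<lambda>p. \<Sum>m\<in>supp f. \<Sum>a\<in>set_mset (fst m).
      if (fst m - {#a#} + {#dletter a#}, snd m) = p then f m * of_nat (count (fst m) a) else 0)"

definition bgen :: "'x \<Rightarrow> ('x bmon \<Rightarrow> 'k::comm_ring_1)" where
  "bgen x = (\<lambda>p. if p = ({#(0, x)#}, 0) then 1 else 0)"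

inductive_set SGD_shriek :: "('x bmon \<Rightarrow> 'k::comm_ring_1) set" where
  gen: "bgen x \<in> SGD_shriek"
| zero: "(\<lambda>_. 0) \<in> SGD_shriek"
| add: "u \<in> SGD_shriek \<Longrightarrow> v \<in> SGD_shriek \<Longrightarrow> (\<lambda>p. u p + v p) \<in> SGD_shriek"
| smult: "u \<in> SGD_shriek \<Longrightarrow> (\<lambda>p. c * u p) \<in> SGD_shriek"
| star: "u \<in> SGD_shriek \<Longrightarrow> v \<in> SGD_shriek \<Longrightarrow> bstar u v \<in> SGD_shriek"
| dstar: "u \<in> SGD_shriek \<Longrightarrow> v \<in> SGD_shriek \<Longrightarrow> bodot (bder u) v \<in> SGD_shriek"

end

theory Submission
  imports Defs
begin

text \<open>
  All generating operations are homogeneous for the weight: a generator has weight -1, \<open>*\<close>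
  adds 1, \<open>d\<close> adds 1 and \<open>\<odot>\<close> is additive, so \<open>u * v\<close> and \<open>d(u) \<odot> v\<close> have weight -1
  whenever \<open>u\<close> and \<open>v\<close> do. Conversely, a monomial of weight -1 lies in the subalgebra, by
  induction on its number of letters and then on the sum of the squares of the orders of its
  letters. If no letter is derived, weight -1 forces \<open>k - 1\<close> stars among its \<open>k\<close> letters
  and the monomial is \<open>x * (rest)\<close>. Otherwise take a letter \<open>d\<^sup>s y\<close> with \<open>s \<ge> 1\<close>:
  weight -1 provides \<open>s - 1\<close> underived letters \<open>c\<^sub>i\<close> besides it and a nonempty remainder
  \<open>V\<close>, and by the Leibniz rule \<open>d(d\<^sup>s\<^sup>-\<^sup>1 y \<odot> c\<^sub>1 \<odot> \<dots> \<odot> c\<^sub>s\<^sub>-\<^sub>1) \<odot> V\<close> is the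
  monomial plus the terms in which the derivative falls on some \<open>c\<^sub>i\<close> instead. Those terms
  have a smaller sum of squares, and both factors have fewer letters.
\<close>

definition basis_elem :: "'x bmon \<Rightarrow> ('x bmon \<Rightarrow> 'k::comm_ring_1)" where
  "basis_elem m = (\<lambda>p. if p = m then 1 else 0)"

definition der_at :: "'x bmon \<Rightarrow> 'x letter \<Rightarrow> 'x bmon" where
  "der_at m a = (fst m - {#a#} + {#dletter a#}, snd m)"

definition letters_weight :: "'x letter multiset \<Rightarrow> int" where
  "letters_weight M = (\<Sum>a\<in>#M. int (fst a) - 1)"

definition sum_sq_orders :: "'x letter multiset \<Rightarrow> nat" where
  "sum_sq_orders M = (\<Sum>a\<in>#M. fst a ^ 2)"

definition weight_homogeneous :: "int \<Rightarrow> ('x bmon \<Rightarrow> 'k::zero) \<Rightarrow> bool" where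
  "weight_homogeneous w f \<longleftrightarrow> (\<forall>m\<in>supp f. mon_weight m = w)"

lemma letters_weight_simps [simp]:
  "letters_weight {#} = 0"
  "letters_weight (add_mset a M) = int (fst a) - 1 + letters_weight M"
  "letters_weight (M + N) = letters_weight M + letters_weight N"
  by (simp_all add: letters_weight_def)

lemma sum_sq_orders_simps [simp]:
  "sum_sq_orders {#} = 0"
  "sum_sq_orders (add_mset a M) = fst a ^ 2 + sum_sq_orders M"
  "sum_sq_orders (M + N) = sum_sq_orders M + sum_sq_orders N"
  by (simp_all add: sum_sq_orders_def)

lemma mon_weight_eq: "mon_weight m = letters_weight (fst m) + int (snd m)"
  by (simp add: mon_weight_def letters_weight_def)

lemma letters_weight_underived: "\<forall>a\<in>#M. fst a = 0 \<Longrightarrow> letters_weight M = - int (size M)"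
  by (induction M) auto

lemma letters_weight_lower_bound: "letters_weight M \<ge> - int (size (filter_mset (\<lambda>a. fst a = 0) M))"
  by (induction M) auto

lemma mon_weight_star_mon: "mon_weight (star_mon m n) = mon_weight m + mon_weight n + 1"
  by (simp add: mon_weight_eq star_mon_def)

lemma mon_weight_odot_mon: "mon_weight (odot_mon m n) = mon_weight m + mon_weight n"
  by (simp add: mon_weight_eq odot_mon_def)

lemma mon_weight_der_at:
  assumes "a \<in># fst m"
  shows "mon_weight (der_at m a) = mon_weight m + 1"
proof -
  obtain N where "fst m = add_mset a N"
    using assms by (metis insert_DiffM)
  then show ?thesis by (simp add: mon_weight_eq der_at_def dletter_def)
qed

lemma supp_double_sum_subset:
  "supp (\<lambda>p. \<Sum>m\<in>A. \<Sum>n\<in>B m. if h m n = p then c m n else (0::'k::comm_monoid_add))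
     \<subseteq> {h m n | m n. m \<in> A \<and> n \<in> B m}"
proof
  fix p
  assume p: "p \<in> supp (\<lambda>p. \<Sum>m\<in>A. \<Sum>n\<in>B m. if h m n = p then c m n else 0)"
  show "p \<in> {h m n | m n. m \<in> A \<and> n \<in> B m}"
  proof (rule ccontr)
    assume "p \<notin> {h m n | m n. m \<in> A \<and> n \<in> B m}"
    then have "(\<Sum>m\<in>A. \<Sum>n\<in>B m. if h m n = p then c m n else 0) = 0"
      by (auto intro!: sum.neutral)
    with p show False by (simp add: supp_def)
  qed
qed

lemma supp_bstar: "supp (bstar u v) \<subseteq> {star_mon m n | m n. m \<in> supp u \<and> n \<in> supp v}"
  unfolding bstar_def by (rule supp_double_sum_subset)

lemma supp_bodot: "supp (bodot u v) \<subseteq> {odot_mon m n | m n. m \<in> supp u \<and> n \<in> supp v}"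
  unfolding bodot_def by (rule supp_double_sum_subset)

lemma supp_bder: "supp (bder u) \<subseteq> {der_at m a | m a. m \<in> supp u \<and> a \<in># fst m}"
  unfolding bder_def der_at_def by (rule supp_double_sum_subset)

lemma weight_homogeneous_zero: "weight_homogeneous w (\<lambda>_. 0)"
  by (simp add: weight_homogeneous_def supp_def)

lemma weight_homogeneous_add:
  "weight_homogeneous w u \<Longrightarrow> weight_homogeneous w v \<Longrightarrow>
     weight_homogeneous w (\<lambda>p. u p + v p :: 'k::comm_monoid_add)"
  unfolding weight_homogeneous_def supp_def by (metis (mono_tags) add_0 mem_Collect_eq)

lemma weight_homogeneous_smult:
  "weight_homogeneous w u \<Longrightarrow> weight_homogeneous w (\<lambda>p. c * u p :: 'k::mult_zero)"
  unfolding weight_homogeneous_def supp_def by (metis (mono_tags) mult_zero_right mem_Collect_eq)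

lemma weight_homogeneous_bstar:
  "weight_homogeneous w u \<Longrightarrow> weight_homogeneous w' v \<Longrightarrow>
     weight_homogeneous (w + w' + 1) (bstar u v)"
  using supp_bstar[of u v] by (force simp: weight_homogeneous_def mon_weight_star_mon)

lemma weight_homogeneous_bodot:
  "weight_homogeneous w u \<Longrightarrow> weight_homogeneous w' v \<Longrightarrow>
     weight_homogeneous (w + w') (bodot u v)"
  using supp_bodot[of u v] by (force simp: weight_homogeneous_def mon_weight_odot_mon)

lemma weight_homogeneous_bder:
  "weight_homogeneous w u \<Longrightarrow> weight_homogeneous (w + 1) (bder u)"
  using supp_bder[of u] by (force simp: weight_homogeneous_def mon_weight_der_at)

lemma weight_homogeneous_SGD_shriek:
  "u \<in> SGD_shriek \<Longrightarrow> weight_homogeneous (-1) u"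
proof (induction rule: SGD_shriek.induct)
  case (gen x)
  show ?case
    by (simp add: weight_homogeneous_def supp_def bgen_def mon_weight_eq)
next
  case (star u v)
  then show ?case using weight_homogeneous_bstar by fastforce
next
  case (dstar u v)
  then show ?case using weight_homogeneous_bodot weight_homogeneous_bder by fastforce
qed (simp_all add: weight_homogeneous_zero weight_homogeneous_add weight_homogeneous_smult)

lemma supp_basis_elem [simp]: "supp (basis_elem m :: _ \<Rightarrow> 'k::comm_ring_1) = {m}"
  by (auto simp: supp_def basis_elem_def)

lemma basis_elem_expansion:
  assumes "finite (supp f)"
  shows "(\<lambda>p. \<Sum>m\<in>supp f. f m * basis_elem m p) = f"
proof
  fix p
  have "(\<Sum>m\<in>supp f. f m * basis_elem m p) = (\<Sum>m\<in>supp f. if p = m then f m else 0)"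
    by (intro sum.cong) (auto simp: basis_elem_def)
  also have "\<dots> = f p"
    using assms by (simp add: supp_def)
  finally show "(\<Sum>m\<in>supp f. f m * basis_elem m p) = f p" .
qed

lemma bgen_eq_basis_elem: "bgen x = basis_elem ({#(0, x)#}, 0)"
  by (simp add: bgen_def basis_elem_def fun_eq_iff)

lemma bstar_basis_elem: "bstar (basis_elem m) (basis_elem n) = basis_elem (star_mon m n)"
  unfolding bstar_def supp_basis_elem by (simp add: basis_elem_def fun_eq_iff)

lemma bder_basis_elem:
  "bder (basis_elem w) =
     (\<lambda>p. \<Sum>a\<in>set_mset (fst w). of_nat (count (fst w) a) * basis_elem (der_at w a) p)"
  unfolding bder_def supp_basis_elem by (auto simp: der_at_def basis_elem_def intro!: sum.cong)

lemma bodot_basis_elem_right: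
  "bodot f (basis_elem v) p = (\<Sum>m\<in>supp f. if odot_mon m v = p then f m else 0)"
  unfolding bodot_def supp_basis_elem by (simp add: basis_elem_def cong: if_cong)

lemma bodot_bder_basis_elem:
  "bodot (bder (basis_elem w)) (basis_elem v) =
     (\<lambda>p. \<Sum>a\<in>set_mset (fst w).
        of_nat (count (fst w) a) * basis_elem (odot_mon (der_at w a) v) p :: 'k::comm_ring_1)"
proof
  fix p
  define A where "A = set_mset (fst w)"
  define c where "c a = (of_nat (count (fst w) a) :: 'k)" for a
  define f where "f = (bder (basis_elem w) :: _ \<Rightarrow> 'k)"
  have f_eq: "f m = (\<Sum>a\<in>A. c a * basis_elem (der_at w a) m)" for m
    by (simp add: f_def A_def c_def bder_basis_elem)
  have "supp f \<subseteq> der_at w ` A"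
    using supp_bder[of "basis_elem w :: _ \<Rightarrow> 'k"] by (auto simp: f_def A_def)
  then have "bodot f (basis_elem v) p = (\<Sum>m\<in>der_at w ` A. if odot_mon m v = p then f m else 0)"
    unfolding bodot_basis_elem_right by (intro sum.mono_neutral_left) (auto simp: A_def supp_def)
  also have "\<dots> = (\<Sum>m\<in>der_at w ` A. \<Sum>a\<in>A.
      if der_at w a = m then (if odot_mon m v = p then c a else 0) else 0)"
  proof (rule sum.cong[OF refl])
    fix m
    show "(if odot_mon m v = p then f m else 0) =
        (\<Sum>a\<in>A. if der_at w a = m then (if odot_mon m v = p then c a else 0) else 0)"
      by (cases "odot_mon m v = p")
        (simp_all add: f_eq basis_elem_def if_distrib[of "(*) _"] eq_commute[of m] cong: if_cong)
  qed
  also have "\<dots> = (\<Sum>a\<in>A. \<Sum>m\<in>der_at w ` A.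
      if der_at w a = m then (if odot_mon m v = p then c a else 0) else 0)"
    by (rule sum.swap)
  also have "\<dots> = (\<Sum>a\<in>A. c a * basis_elem (odot_mon (der_at w a) v) p)"
    by (intro sum.cong refl) (simp add: A_def basis_elem_def)
  finally show "bodot (bder (basis_elem w)) (basis_elem v) p =
      (\<Sum>a\<in>set_mset (fst w). of_nat (count (fst w) a) * basis_elem (odot_mon (der_at w a) v) p :: 'k)"
    by (simp add: f_def A_def c_def)
qed

lemma bodot_bder_basis_elem_split:
  fixes e :: "'x letter"
  assumes "e \<notin># C"
  shows "bodot (bder (basis_elem (add_mset e C, 0))) (basis_elem (V, t)) =
    (\<lambda>p. basis_elem (add_mset (dletter e) (C + V), t) p +
       (\<Sum>b\<in>set_mset C. of_nat (count C b) *
          basis_elem (add_mset e (C - {#b#}) + {#dletter b#} + V, t) p) :: 'k::comm_ring_1)"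
    (is "_ = (\<lambda>p. ?main p + (\<Sum>b\<in>_. ?term b p))")
proof
  fix p
  define w where "w = (add_mset e C, 0::nat)"
  define g :: "'x letter \<Rightarrow> 'k"
    where "g a = of_nat (count (fst w) a) * basis_elem (odot_mon (der_at w a) (V, t)) p" for a
  have g_e: "g e = ?main p"
    using assms by (simp add: g_def w_def der_at_def odot_mon_def not_in_iff)
  have g_b: "g b = ?term b p" if "b \<in># C" for b
  proof -
    have "b \<noteq> e"
      using that assms by auto
    then have "add_mset e C - {#b#} = add_mset e (C - {#b#})"
      by simp
    with \<open>b \<noteq> e\<close> show ?thesis
      by (simp add: g_def w_def der_at_def odot_mon_def)
  qed
  have "e \<notin> set_mset C"
    using assms by simp
  then have "bodot (bder (basis_elem w)) (basis_elem (V, t)) p = g e + (\<Sum>b\<in>set_mset C. g b)"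
    by (simp add: bodot_bder_basis_elem g_def w_def)
  also have "\<dots> = ?main p + (\<Sum>b\<in>set_mset C. ?term b p)"
    using g_e g_b by simp
  finally show "bodot (bder (basis_elem (add_mset e C, 0))) (basis_elem (V, t)) p =
      ?main p + (\<Sum>b\<in>set_mset C. ?term b p)"
    by (simp add: w_def)
qed

lemma SGD_shriek_lincomb:
  assumes "finite I" "\<forall>i\<in>I. g i \<in> SGD_shriek"
  shows "(\<lambda>p. \<Sum>i\<in>I. c i * g i p) \<in> SGD_shriek"
  using assms
proof (induction I rule: finite_induct)
  case empty
  then show ?case by (simp add: SGD_shriek.zero)
next
  case (insert i I)
  then show ?case
    using SGD_shriek.add[OF SGD_shriek.smult[of "g i" "c i"], of "\<lambda>p. \<Sum>i\<in>I. c i * g i p"]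
    by simp
qed

lemma SGD_shriek_diff:
  "u \<in> SGD_shriek \<Longrightarrow> v \<in> SGD_shriek \<Longrightarrow> (\<lambda>p. u p - v p) \<in> SGD_shriek"
  using SGD_shriek.add[OF _ SGD_shriek.smult, of u v "-1"] by simp

lemma mon_weight_minus_one_split:
  assumes "mon_weight (M, t) = -1" "a \<in># M" "fst a > 0"
  obtains C V where "M = add_mset a (C + V)" "size C = fst a - 1" "\<forall>b\<in>#C. fst b = 0" "V \<noteq> {#}"
proof -
  define Z where "Z = filter_mset (\<lambda>b. fst b = 0) (M - {#a#})"
  define P where "P = filter_mset (\<lambda>b. fst b \<noteq> 0) (M - {#a#})"
  have M: "M = add_mset a (Z + P)"
    using assms(2) by (simp add: Z_def P_def)
  have "letters_weight M = int (fst a) - 1 + letters_weight (M - {#a#})"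
    using assms(2) by (metis insert_DiffM letters_weight_simps(2))
  then have "int (fst a) - 1 - int (size Z) \<le> letters_weight M"
    using letters_weight_lower_bound[of "M - {#a#}"] by (simp add: Z_def)
  also have "letters_weight M \<le> -1"
    using assms(1) by (simp add: mon_weight_eq)
  finally have "fst a \<le> size Z"
    by simp
  obtain xs where xs: "mset xs = Z"
    using ex_mset by blast
  have "\<forall>b\<in>#Z. fst b = 0"
    unfolding Z_def by (simp only: set_mset_filter) blast
  then have xs_underived: "\<forall>b\<in>set xs. fst b = 0"
    by (simp flip: xs)
  define C where "C = mset (take (fst a - 1) xs)"
  define R where "R = mset (drop (fst a - 1) xs)"
  show thesis
  proof (rule that[of C "R + P"])
    have "Z = C + R"
      unfolding C_def R_def xs[symmetric] by (simp flip: mset_append)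
    then show "M = add_mset a (C + (R + P))"
      using M by (simp add: add.assoc)
    show "size C = fst a - 1"
      using \<open>fst a \<le> size Z\<close> xs by (auto simp: C_def)
    show "\<forall>b\<in>#C. fst b = 0"
      using set_take_subset[of "fst a - 1" xs] xs_underived by (auto simp: C_def)
    show "R + P \<noteq> {#}"
      using \<open>fst a \<le> size Z\<close> assms(3) xs by (auto simp: R_def)
  qed
qed

lemma basis_elem_in_SGD_shriek_underived:
  fixes M :: "'x letter multiset"
  assumes underived: "\<forall>a\<in>#M. fst a = 0" and "M \<noteq> {#}" "mon_weight (M, t) = -1"
    and IH: "\<And>(M' :: 'x letter multiset) t'. size M' < size M \<Longrightarrow> M' \<noteq> {#} \<Longrightarrow>
      mon_weight (M', t') = -1 \<Longrightarrow> (basis_elem (M', t') :: _ \<Rightarrow> 'k::comm_ring_1) \<in> SGD_shriek"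
  shows "(basis_elem (M, t) :: _ \<Rightarrow> 'k) \<in> SGD_shriek"
proof -
  obtain x M' where M: "M = add_mset (0, x) M'"
    using \<open>M \<noteq> {#}\<close> underived by (metis multiset_nonemptyE insert_DiffM prod.collapse)
  have t: "t = size M'"
    using assms(3) letters_weight_underived[OF underived] by (simp add: mon_weight_eq M)
  show ?thesis
  proof (cases "M' = {#}")
    case True
    then show ?thesis
      using SGD_shriek.gen[of x] by (simp add: M t bgen_eq_basis_elem)
  next
    case False
    then obtain t' where t': "t = Suc t'"
      using t by (metis size_eq_0_iff_empty not0_implies_Suc)
    have "mon_weight (M', t') = -1"
      using assms(3) by (simp add: mon_weight_eq M t')
    then have "(basis_elem (M', t') :: _ \<Rightarrow> 'k) \<in> SGD_shriek"
      using IH[of M' t'] False by (simp add: M)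
    then have "bstar (bgen x) (basis_elem (M', t')) \<in> (SGD_shriek :: (_ \<Rightarrow> 'k) set)"
      by (rule SGD_shriek.star[OF SGD_shriek.gen])
    then show ?thesis
      by (simp add: bgen_eq_basis_elem bstar_basis_elem star_mon_def M t')
  qed
qed

lemma basis_elem_in_SGD_shriek_derived:
  fixes M :: "'x letter multiset"
  assumes "a \<in># M" "fst a > 0" "mon_weight (M, t) = -1"
    and IH: "\<And>(M' :: 'x letter multiset) t'. (M', M) \<in> measures [size, sum_sq_orders] \<Longrightarrow>
      M' \<noteq> {#} \<Longrightarrow> mon_weight (M', t') = -1 \<Longrightarrow>
      (basis_elem (M', t') :: _ \<Rightarrow> 'k::comm_ring_1) \<in> SGD_shriek"
  shows "(basis_elem (M, t) :: _ \<Rightarrow> 'k) \<in> SGD_shriek"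
proof -
  obtain s y where a: "a = (Suc s, y)"
    using assms(2) by (metis gr0_implies_Suc prod.collapse)
  obtain C V where M: "M = add_mset a (C + V)"
    and C: "size C = s" "\<forall>b\<in>#C. fst b = 0" and "V \<noteq> {#}"
    using mon_weight_minus_one_split[OF assms(3,1,2)] a by auto
  define e where "e = (s, y)"
  have a_eq: "a = dletter e"
    by (simp add: e_def a dletter_def)
  have "e \<notin># C"
    using C by (auto simp: e_def)
  have wC: "letters_weight C = - int s"
    using letters_weight_underived[OF C(2)] C(1) by simp
  have "(basis_elem (add_mset e C, 0) :: _ \<Rightarrow> 'k) \<in> SGD_shriek"
    using IH[of "add_mset e C" 0] \<open>V \<noteq> {#}\<close>
    by (simp add: M C mon_weight_eq e_def wC nonempty_has_size)
  moreover have "(basis_elem (V, t) :: _ \<Rightarrow> 'k) \<in> SGD_shriek"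
    using IH[of V t] \<open>V \<noteq> {#}\<close> assms(3) by (simp add: M a mon_weight_eq wC)
  moreover have "(basis_elem (add_mset e (C - {#b#}) + {#dletter b#} + V, t) :: _ \<Rightarrow> 'k)
      \<in> SGD_shriek" if "b \<in># C" for b
  proof -
    obtain C' where C': "C = add_mset b C'"
      using \<open>b \<in># C\<close> by (metis insert_DiffM)
    have "fst b = 0" "s > 0"
      using C \<open>b \<in># C\<close> by (auto simp: C')
    then show ?thesis
      using IH[of "add_mset e (C - {#b#}) + {#dletter b#} + V" t] assms(3)
      by (simp add: M a C' e_def dletter_def mon_weight_eq power2_eq_square)
  qed
  ultimately have "(\<lambda>p. bodot (bder (basis_elem (add_mset e C, 0))) (basis_elem (V, t)) p -
      (\<Sum>b\<in>set_mset C. of_nat (count C b) *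
         basis_elem (add_mset e (C - {#b#}) + {#dletter b#} + V, t) p)) \<in> (SGD_shriek :: (_ \<Rightarrow> 'k) set)"
    by (intro SGD_shriek_diff SGD_shriek.dstar SGD_shriek_lincomb) auto
  then show ?thesis
    by (simp add: bodot_bder_basis_elem_split[OF \<open>e \<notin># C\<close>] M a_eq)
qed

lemma basis_elem_in_SGD_shriek:
  fixes M :: "'x letter multiset"
  assumes "M \<noteq> {#}" "mon_weight (M, t) = -1"
  shows "(basis_elem (M, t) :: _ \<Rightarrow> 'k::comm_ring_1) \<in> SGD_shriek"
  using assms
proof (induction M arbitrary: t rule: wf_induct[OF wf_measures[of "[size, sum_sq_orders]"]])
  case (1 M)
  have IH: "(basis_elem (M', t') :: _ \<Rightarrow> 'k) \<in> SGD_shriek"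
    if "(M', M) \<in> measures [size, sum_sq_orders]" "M' \<noteq> {#}" "mon_weight (M', t') = -1" for M' t'
    using "1.IH" that by blast
  show ?case
  proof (cases "\<forall>a\<in>#M. fst a = 0")
    case True
    then show ?thesis
      by (rule basis_elem_in_SGD_shriek_underived[OF _ "1.prems"]) (simp add: IH)
  next
    case False
    then obtain a where "a \<in># M" "fst a > 0"
      by auto
    then show ?thesis
      by (rule basis_elem_in_SGD_shriek_derived[OF _ _ "1.prems"(2) IH])
  qed
qed

theorem mainTheorem6:
  fixes f :: "('x::linorder) bmon \<Rightarrow> 'k::field_char_0"
  assumes "f \<in> BiComDer"
  shows "f \<in> SGD_shriek \<longleftrightarrow> (\<forall>m\<in>supp f. mon_weight m = -1)"
proof
  assume "f \<in> SGD_shriek"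
  then show "\<forall>m\<in>supp f. mon_weight m = -1"
    using weight_homogeneous_SGD_shriek by (auto simp: weight_homogeneous_def)
next
  assume weights: "\<forall>m\<in>supp f. mon_weight m = -1"
  have "finite (supp f)" and valid: "\<forall>m\<in>supp f. valid_mon m"
    using assms by (auto simp: BiComDer_def)
  have "\<forall>m\<in>supp f. (basis_elem m :: _ \<Rightarrow> 'k) \<in> SGD_shriek"
  proof
    fix m
    assume "m \<in> supp f"
    then show "(basis_elem m :: _ \<Rightarrow> 'k) \<in> SGD_shriek"
      using weights valid basis_elem_in_SGD_shriek[of "fst m" "snd m"] by (simp add: valid_mon_def)
  qed
  then have "(\<lambda>p. \<Sum>m\<in>supp f. f m * basis_elem m p) \<in> SGD_shriek"
    using \<open>finite (supp f)\<close> by (intro SGD_shriek_lincomb)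
  then show "f \<in> SGD_shriek"
    by (simp only: basis_elem_expansion[OF \<open>finite (supp f)\<close>])
qed

end
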